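(* Let $\Gamma$ be a finite undirected graph in which any two adjacent vertices have exactly one common neighbor. Then $G_{aut}^+(\Gamma)=G_{aut}^*(\Gamma)$. In particular, $G_{aut}^+(\Gamma)=G_{aut}^*(\Gamma)$ for every distance-regular graph $\Gamma$ whose intersection array satisfies $b_0=b_1+2$.
   Context: $\Gamma=(V,E)$ is a finite simple undirected graph, $V=\{1,\dots,n\}$. $C(G_{aut}^+(\Gamma))$ is the universal unital $C^*$-algebra generated by $u_{ij}$, $1\le i,j\le n$, with relations: (R1) $u_{ij}=u_{ij}^*=u_{ij}^2$; (R2) $\sum_{l} u_{il}=1=\sum_{l} u_{li}$ for all $i$; (R3) $u_{ij}u_{kl}=u_{kl}u_{ij}=0$ whenever exactly one of $(i,k)\in E$, $(j,l)\in E$ holds. "$G_{aut}^+(\Gamma)=G_{aut}^*(\Gamma)$" means that $u_{ij}u_{kl}=u_{kl}u_{ij}$ holds in $C(G_{aut}^+(\Gamma))$ for all $(i,k)\in E$, $(j,l)\in E$. A connected regular graph is distance-regular with diameter $D$ and intersection array $\{b_0,\dots,b_{D-1};c_1,\dots,c_D\}$ if for any vertices $v,w$ with $d(v,w)=i$, exactly $b_i$ neighbors of $w$ are at distance $i+1$ from $v$ and exactly $c_i$ neighbors of $w$ are at distance $i-1$ from $v$ (these numbers depending only on $i$). *)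

theory Defs
  imports "HOL-Analysis.Analysis"
begin

text \<open>A unital C*-algebra: a real Banach algebra with unit (norm 1 = 1, submultiplicative
norm, completeness) whose real scalar multiplication extends to a complex one
(sc), equipped with an involution st satisfying the C*-identity.\<close>

definition unital_cstar_algebra ::
  "('a::{real_normed_algebra_1,banach} \<Rightarrow> 'a) \<Rightarrow> (complex \<Rightarrow> 'a \<Rightarrow> 'a) \<Rightarrow> bool" where
  "unital_cstar_algebra st sc \<longleftrightarrow>
     (\<forall>r x. sc (complex_of_real r) x = scaleR r x) \<and>
     (\<forall>a b x. sc (a + b) x = sc a x + sc b x) \<and>
     (\<forall>a x y. sc a (x + y) = sc a x + sc a y) \<and>
     (\<forall>a b x. sc a (sc b x) = sc (a * b) x) \<and>
     (\<forall>x. sc 1 x = x) \<and>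
     (\<forall>a x y. sc a (x * y) = sc a x * y \<and> sc a (x * y) = x * sc a y) \<and>
     (\<forall>a x. norm (sc a x) = cmod a * norm x) \<and>
     (\<forall>x. st (st x) = x) \<and>
     (\<forall>x y. st (x + y) = st x + st y) \<and>
     (\<forall>a x. st (sc a x) = sc (cnj a) (st x)) \<and>
     (\<forall>x y. st (x * y) = st y * st x) \<and>
     (\<forall>x. norm (st x * x) = (norm x)\<^sup>2)"

definition simple_graph :: "nat \<Rightarrow> (nat \<Rightarrow> nat \<Rightarrow> bool) \<Rightarrow> bool" where
  "simple_graph n E \<longleftrightarrow>
     (\<forall>i k. E i k \<longrightarrow> i \<in> {1..n} \<and> k \<in> {1..n}) \<and>
     (\<forall>i k. E i k \<longrightarrow> E k i) \<and> (\<forall>i. \<not> E i i)"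

definition qaut_rel ::
  "nat \<Rightarrow> (nat \<Rightarrow> nat \<Rightarrow> bool) \<Rightarrow> ('a::{real_normed_algebra_1,banach} \<Rightarrow> 'a)
     \<Rightarrow> (nat \<Rightarrow> nat \<Rightarrow> 'a) \<Rightarrow> bool" where
  "qaut_rel n E st u \<longleftrightarrow>
     (\<forall>i\<in>{1..n}. \<forall>j\<in>{1..n}. u i j = st (u i j) \<and> u i j = u i j * u i j) \<and>
     (\<forall>i\<in>{1..n}. (\<Sum>l\<in>{1..n}. u i l) = 1 \<and> (\<Sum>l\<in>{1..n}. u l i) = 1) \<and>
     (\<forall>i\<in>{1..n}. \<forall>j\<in>{1..n}. \<forall>k\<in>{1..n}. \<forall>l\<in>{1..n}.
        (E i k \<noteq> E j l) \<longrightarrow> u i j * u k l = 0 \<and> u k l * u i j = 0)"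

text \<open>G_aut^+(Gamma) = G_aut^*(Gamma): u_ij u_kl = u_kl u_ij in the universal C*-algebra for
all edges (i,k), (j,l). By the universal property this is equivalent to: in every
unital C*-algebra, every family satisfying (R1)-(R3) has this commutation property.
The C*-algebra type is a type variable, universally quantified at theorem level.\<close>

definition qaut_eq_star :: "'a::{real_normed_algebra_1,banach} itself \<Rightarrow> nat \<Rightarrow> (nat \<Rightarrow> nat \<Rightarrow> bool) \<Rightarrow> bool" where
  "qaut_eq_star TYPE('a) n E \<longleftrightarrow>
     (\<forall>(st :: 'a \<Rightarrow> 'a) sc (u :: nat \<Rightarrow> nat \<Rightarrow> 'a).
        unital_cstar_algebra st sc \<and> qaut_rel n E st u \<longrightarrow>
        (\<forall>i\<in>{1..n}. \<forall>j\<in>{1..n}. \<forall>k\<in>{1..n}. \<forall>l\<in>{1..n}.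
           E i k \<and> E j l \<longrightarrow> u i j * u k l = u k l * u i j))"

fun ball_k :: "(nat \<Rightarrow> nat \<Rightarrow> bool) \<Rightarrow> nat \<Rightarrow> nat \<Rightarrow> nat set" where
  "ball_k E 0 v = {v}"
| "ball_k E (Suc k) v = ball_k E k v \<union> {w. \<exists>x\<in>ball_k E k v. E x w}"

definition gdist :: "(nat \<Rightarrow> nat \<Rightarrow> bool) \<Rightarrow> nat \<Rightarrow> nat \<Rightarrow> nat" where
  "gdist E v w = (LEAST k. w \<in> ball_k E k v)"

definition connected_graph :: "nat \<Rightarrow> (nat \<Rightarrow> nat \<Rightarrow> bool) \<Rightarrow> bool" where
  "connected_graph n E \<longleftrightarrow> (\<forall>v\<in>{1..n}. \<forall>w\<in>{1..n}. \<exists>k. w \<in> ball_k E k v)"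

definition regular_graph :: "nat \<Rightarrow> (nat \<Rightarrow> nat \<Rightarrow> bool) \<Rightarrow> bool" where
  "regular_graph n E \<longleftrightarrow>
     (\<exists>r. \<forall>v\<in>{1..n}. card {w\<in>{1..n}. E v w} = r)"

definition diameter :: "nat \<Rightarrow> (nat \<Rightarrow> nat \<Rightarrow> bool) \<Rightarrow> nat" where
  "diameter n E = Max {gdist E v w | v w. v \<in> {1..n} \<and> w \<in> {1..n}}"

text \<open>Distance-regular with diameter D and intersection numbers b i (0 \<le> i \<le> D, so b D = 0)
and c i (1 \<le> i \<le> D).\<close>

definition distance_regular ::
  "nat \<Rightarrow> (nat \<Rightarrow> nat \<Rightarrow> bool) \<Rightarrow> nat \<Rightarrow> (nat \<Rightarrow> nat) \<Rightarrow> (nat \<Rightarrow> nat) \<Rightarrow> bool" where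
  "distance_regular n E D b c \<longleftrightarrow>
     connected_graph n E \<and> regular_graph n E \<and> D = diameter n E \<and>
     (\<forall>v\<in>{1..n}. \<forall>w\<in>{1..n}. gdist E v w \<le> D \<longrightarrow>
        card {x\<in>{1..n}. E w x \<and> gdist E v x = gdist E v w + 1} = b (gdist E v w) \<and>
        (gdist E v w \<ge> 1 \<longrightarrow>
          card {x\<in>{1..n}. E w x \<and> gdist E v x + 1 = gdist E v w} = c (gdist E v w)))"

end

theory Submission
  imports Defs
begin

(* If i ~ k and j ~ l, let p and q be the unique common neighbours of i, k and of j, l.
   Inserting a row sum of the magic unitary u and killing all terms by (R3) gives
   u_ij u_kl = u_ij u_pq u_kl together with two analogous identities; these force the
   product u_ij u_kl to be idempotent, and in a C*-algebra two projections with idempotent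
   product commute.  In a distance-regular graph the neighbourhood of w splits, relative to
   a neighbour v, into v itself, the common neighbours of v and w, and the b_1 neighbours at
   distance 2 from v; hence v and w have b_0 - b_1 - 1 common neighbours. *)

definition projection :: "('a::{real_normed_algebra_1,banach} \<Rightarrow> 'a) \<Rightarrow> 'a \<Rightarrow> bool" where
  "projection st p \<longleftrightarrow> st p = p \<and> p * p = p"

lemma unital_cstar_algebra_st_mult_self_eq_0:
  assumes "unital_cstar_algebra st sc" and "st x * x = 0"
  shows "x = 0"
proof -
  have "norm (st x * x) = (norm x)\<^sup>2"
    using assms(1) unfolding unital_cstar_algebra_def by blast
  with assms(2) show ?thesis by simp
qed

lemma unital_cstar_algebra_st_diff:
  assumes "unital_cstar_algebra st sc"
  shows "st (x - y) = st x - st y"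
proof -
  have "st (x - y) + st y = st x"
    using assms unfolding unital_cstar_algebra_def by (metis diff_add_cancel)
  then show ?thesis by (simp add: eq_diff_eq)
qed

lemma unital_cstar_algebra_st_mult:
  "unital_cstar_algebra st sc \<Longrightarrow> st (x * y) = st y * st x"
  unfolding unital_cstar_algebra_def by blast

lemma qaut_rel_projection:
  assumes "qaut_rel n E st u" and "i \<in> {1..n}" and "j \<in> {1..n}"
  shows "projection st (u i j)"
proof -
  have "u i j = st (u i j) \<and> u i j = u i j * u i j"
    using assms unfolding qaut_rel_def by blast
  then show ?thesis unfolding projection_def by simp
qed

lemma projections_commute_if_product_idempotent:
  assumes cstar: "unital_cstar_algebra st sc"
    and p: "projection st p" and q: "projection st q"
    and idem: "p * q * p * q = p * q"
  shows "p * q = q * p"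
proof -
  have pqqp: "p * q * (q * p) = p * q * p"
    using p q unfolding projection_def by (metis mult.assoc)
  have pqppqp: "p * q * p * (p * q * p) = p * q * p"
    using p idem unfolding projection_def by (metis mult.assoc)
  have pqpqp: "p * q * (p * q * p) = p * q * p" "p * q * p * (q * p) = p * q * p"
    using idem by (metis mult.assoc)+
  have st_p: "st p = p" and st_q: "st q = q"
    using p q unfolding projection_def by auto
  have st_pqp: "st (p * q * p) = p * q * p" and st_qp: "st (q * p) = p * q"
    using st_p st_q unital_cstar_algebra_st_mult[OF cstar] by (simp_all add: mult.assoc)
  define y where "y = q * p - p * q * p"
  have st_y: "st y = p * q - p * q * p"
    unfolding y_def unital_cstar_algebra_st_diff[OF cstar] st_pqp st_qp ..
  have "st y * y = (p * q - p * q * p) * (q * p - p * q * p)"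
    using st_y y_def by simp
  also have "\<dots> = p * q * (q * p) - p * q * (p * q * p) - (p * q * p * (q * p) - p * q * p * (p * q * p))"
    by (simp add: left_diff_distrib right_diff_distrib)
  also have "\<dots> = 0"
    unfolding pqqp pqppqp pqpqp by simp
  finally have "y = 0"
    by (rule unital_cstar_algebra_st_mult_self_eq_0[OF cstar])
  then have qp: "q * p = p * q * p"
    unfolding y_def by simp
  have "p * q = st (q * p)" by (rule st_qp[symmetric])
  also have "\<dots> = p * q * p" unfolding qp by (rule st_pqp)
  finally show ?thesis using qp by simp
qed

lemma product_idempotent_of_insertions:
  fixes a b c :: "'a::semigroup_mult"
  assumes ab: "a * b = a * c * b" and cb: "c * b = c * a * b" and ca: "c * a = c * b * a"
  shows "a * b * a * b = a * b"
proof -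
  have aca: "a * c * a = a * b * a"
    using ab ca by (metis mult.assoc)
  have "a * b = a * c * a * b"
    using ab cb by (metis mult.assoc)
  also have "\<dots> = a * b * a * b" unfolding aca ..
  finally show ?thesis ..
qed

lemma qaut_rel_insert_common_neighbour:
  fixes u :: "nat \<Rightarrow> nat \<Rightarrow> 'a::{real_normed_algebra_1,banach}"
  assumes sg: "simple_graph n E" and rel: "qaut_rel n E st u"
    and xz: "E x z" and yz: "E y z"
    and a: "a \<in> {1..n}" and b: "b \<in> {1..n}" and c: "c \<in> {1..n}"
    and unique: "\<forall>s\<in>{1..n}. E a s \<and> E b s \<longrightarrow> s = c"
  shows "u x a * u y b = u x a * u z c * u y b"
proof -
  have x: "x \<in> {1..n}" and y: "y \<in> {1..n}" and z: "z \<in> {1..n}"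
    using sg xz yz unfolding simple_graph_def by blast+
  have sym: "E s t \<Longrightarrow> E t s" for s t
    using sg unfolding simple_graph_def by blast
  have R3: "\<lbrakk>i \<in> {1..n}; j \<in> {1..n}; k \<in> {1..n}; l \<in> {1..n}; E i k \<noteq> E j l\<rbrakk>
      \<Longrightarrow> u i j * u k l = 0" for i j k l
    using rel unfolding qaut_rel_def by blast
  have vanish: "u x a * u z s * u y b = 0" if s: "s \<in> {1..n} - {c}" for s
  proof (cases "E a s")
    case False
    then have "u x a * u z s = 0" using R3[OF x a z] s xz by simp
    then show ?thesis by simp
  next
    case True
    then have "\<not> E s b" using unique s sym by blast
    then have "u z s * u y b = 0" using R3[OF z _ y b] s sym[OF yz] by simp
    then show ?thesis by (simp add: mult.assoc)
  qed
  have "(\<Sum>s\<in>{1..n}. u z s) = 1"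
    using rel z unfolding qaut_rel_def by blast
  then have "u x a * u y b = u x a * (\<Sum>s\<in>{1..n}. u z s) * u y b" by simp
  also have "\<dots> = (\<Sum>s\<in>{1..n}. u x a * u z s * u y b)"
    by (simp add: sum_distrib_left sum_distrib_right)
  also have "\<dots> = u x a * u z c * u y b + (\<Sum>s\<in>{1..n} - {c}. u x a * u z s * u y b)"
    using sum.remove[OF _ c] by simp
  also have "\<dots> = u x a * u z c * u y b" using vanish by simp
  finally show ?thesis .
qed

lemma card_eq_1_common_neighbourE:
  assumes "card {l\<in>{1..n}. E i l \<and> E k l} = 1"
  obtains p where "p \<in> {1..n}" "E i p" "E k p"
    and "\<And>s. s \<in> {1..n} \<Longrightarrow> E i s \<Longrightarrow> E k s \<Longrightarrow> s = p"
proof -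
  obtain p where "{l\<in>{1..n}. E i l \<and> E k l} = {p}"
    using assms by (rule card_1_singletonE)
  then show ?thesis using that by blast
qed

lemma qaut_eq_star_if_unique_common_neighbours:
  assumes sg: "simple_graph n E"
    and unique: "\<forall>i k. E i k \<longrightarrow> card {l\<in>{1..n}. E i l \<and> E k l} = 1"
  shows "qaut_eq_star TYPE('a::{real_normed_algebra_1,banach}) n E"
  unfolding qaut_eq_star_def
proof (intro allI impI ballI)
  fix st sc and u :: "nat \<Rightarrow> nat \<Rightarrow> 'a" and i j k l
  assume "unital_cstar_algebra st sc \<and> qaut_rel n E st u"
    and V: "i \<in> {1..n}" "j \<in> {1..n}" "k \<in> {1..n}" "l \<in> {1..n}"
    and "E i k \<and> E j l"
  then have cstar: "unital_cstar_algebra st sc" and rel: "qaut_rel n E st u"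
    and ik: "E i k" and jl: "E j l" by auto
  have sym: "E s t \<Longrightarrow> E t s" for s t
    using sg unfolding simple_graph_def by blast
  have unique_common: "s = t"
    if "E a b" "s \<in> {1..n}" "E a s" "E b s" "t \<in> {1..n}" "E a t" "E b t" for a b s t
  proof -
    obtain r where "\<And>x. x \<in> {1..n} \<Longrightarrow> E a x \<Longrightarrow> E b x \<Longrightarrow> x = r"
      using card_eq_1_common_neighbourE[OF unique[rule_format, OF \<open>E a b\<close>]] by blast
    then show ?thesis using that by blast
  qed
  obtain p where p: "E i p" "E k p"
    using card_eq_1_common_neighbourE[OF unique[rule_format, OF ik]] by blast
  obtain q where q: "q \<in> {1..n}" "E j q" "E l q"
    using card_eq_1_common_neighbourE[OF unique[rule_format, OF jl]] by blast
  have q_unique: "\<forall>s\<in>{1..n}. E j s \<and> E l s \<longrightarrow> s = q"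
    using unique_common[OF jl _ _ _ q] by blast
  have j_unique: "\<forall>s\<in>{1..n}. E q s \<and> E l s \<longrightarrow> s = j"
    using unique_common[OF sym[OF q(3)] _ _ _ V(2) sym[OF q(2)] sym[OF jl]] by blast
  have l_unique: "\<forall>s\<in>{1..n}. E q s \<and> E j s \<longrightarrow> s = l"
    using unique_common[OF sym[OF q(2)] _ _ _ V(4) sym[OF q(3)] jl] by blast
  have "u i j * u k l = u i j * u p q * u k l"
    using qaut_rel_insert_common_neighbour[OF sg rel p V(2,4) q(1) q_unique] .
  moreover have "u p q * u k l = u p q * u i j * u k l"
    using qaut_rel_insert_common_neighbour[OF sg rel sym[OF p(1)] sym[OF ik] q(1) V(4,2) j_unique] .
  moreover have "u p q * u i j = u p q * u k l * u i j"
    using qaut_rel_insert_common_neighbour[OF sg rel sym[OF p(2)] ik q(1) V(2,4) l_unique] .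
  ultimately have "u i j * u k l * u i j * u k l = u i j * u k l"
    by (rule product_idempotent_of_insertions)
  then show "u i j * u k l = u k l * u i j"
    using projections_commute_if_product_idempotent[OF cstar]
      qaut_rel_projection[OF rel V(1,2)] qaut_rel_projection[OF rel V(3,4)] by blast
qed

lemma gdist_le: "x \<in> ball_k E m v \<Longrightarrow> gdist E v x \<le> m"
  unfolding gdist_def by (rule Least_le)

lemma mem_ball_k_gdist: "x \<in> ball_k E m v \<Longrightarrow> x \<in> ball_k E (gdist E v x) v"
  unfolding gdist_def by (rule LeastI)

lemma gdist_self [simp]: "gdist E v v = 0"
  using gdist_le[of v E 0 v] by simp

lemma gdist_eq_0_iff: "x \<in> ball_k E m v \<Longrightarrow> gdist E v x = 0 \<longleftrightarrow> x = v"
  using mem_ball_k_gdist[of x E m v] by auto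

lemma gdist_eq_1_iff:
  assumes "x \<in> ball_k E m v"
  shows "gdist E v x = 1 \<longleftrightarrow> E v x \<and> x \<noteq> v"
proof
  assume "gdist E v x = 1"
  then show "E v x \<and> x \<noteq> v"
    using mem_ball_k_gdist[OF assms] gdist_self[of E v] by auto
next
  assume adj: "E v x \<and> x \<noteq> v"
  then have "x \<in> ball_k E 1 v" by simp
  then show "gdist E v x = 1"
    using gdist_le[of x E 1 v] gdist_eq_0_iff[of x E 1 v] adj by linarith
qed

lemma gdist_le_2: "E v w \<Longrightarrow> E w x \<Longrightarrow> gdist E v x \<le> 2"
  by (rule gdist_le[of _ _ 2]) (auto simp: numeral_2_eq_2)

lemma gdist_le_diameter:
  assumes "v \<in> {1..n}" and "w \<in> {1..n}"
  shows "gdist E v w \<le> diameter n E"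
proof -
  have "{gdist E x y | x y. x \<in> {1..n} \<and> y \<in> {1..n}} = (\<lambda>(x, y). gdist E x y) ` ({1..n} \<times> {1..n})"
    by (auto simp del: atLeastAtMost_iff)
  then have "finite {gdist E x y | x y. x \<in> {1..n} \<and> y \<in> {1..n}}" by simp
  then show ?thesis
    unfolding diameter_def using assms by (intro Max_ge) auto
qed

lemma neighbours_split_by_gdist:
  assumes sg: "simple_graph n E" and conn: "connected_graph n E" and vw: "E v w"
  shows "{x\<in>{1..n}. E w x} =
    insert v ({l\<in>{1..n}. E v l \<and> E w l} \<union> {x\<in>{1..n}. E w x \<and> gdist E v x = 2})"
proof (intro equalityI subsetI)
  fix x assume "x \<in> {x\<in>{1..n}. E w x}"
  then have x: "x \<in> {1..n}" and wx: "E w x" by auto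
  have "v \<in> {1..n}" using sg vw unfolding simple_graph_def by blast
  then obtain m where m: "x \<in> ball_k E m v"
    using conn x unfolding connected_graph_def by blast
  have "gdist E v x \<le> 2" using gdist_le_2[OF vw wx] .
  then consider "gdist E v x = 0" | "gdist E v x = 1" | "gdist E v x = 2" by linarith
  then show "x \<in> insert v ({l\<in>{1..n}. E v l \<and> E w l} \<union> {x\<in>{1..n}. E w x \<and> gdist E v x = 2})"
    by cases (use gdist_eq_0_iff[OF m] gdist_eq_1_iff[OF m] x wx in auto)
next
  fix x
  assume "x \<in> insert v ({l\<in>{1..n}. E v l \<and> E w l} \<union> {x\<in>{1..n}. E w x \<and> gdist E v x = 2})"
  then show "x \<in> {x\<in>{1..n}. E w x}"
    using sg vw unfolding simple_graph_def by auto
qed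

lemma distance_regular_card_common_neighbours:
  assumes sg: "simple_graph n E" and dr: "distance_regular n E D b c" and vw: "E v w"
  shows "b 0 = card {l\<in>{1..n}. E v l \<and> E w l} + b 1 + 1"
proof -
  have v: "v \<in> {1..n}" and w: "w \<in> {1..n}" and irrefl: "\<And>x. \<not> E x x"
    using sg vw unfolding simple_graph_def by blast+
  have conn: "connected_graph n E"
    using dr unfolding distance_regular_def by blast
  have card_b: "card {z\<in>{1..n}. E y z \<and> gdist E x z = gdist E x y + 1} = b (gdist E x y)"
    if "x \<in> {1..n}" "y \<in> {1..n}" for x y
    using dr gdist_le_diameter[OF that] that unfolding distance_regular_def by blast
  have vw_dist: "gdist E v w = 1"
    using gdist_eq_1_iff[of w E 1 v] vw irrefl by auto
  define A where "A = {l\<in>{1..n}. E v l \<and> E w l}"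
  define B where "B = {x\<in>{1..n}. E w x \<and> gdist E v x = 2}"
  have "{z\<in>{1..n}. E w z \<and> gdist E w z = gdist E w w + 1} = {x\<in>{1..n}. E w x}"
    using gdist_eq_1_iff[of _ E 1 w] irrefl by fastforce
  then have "b 0 = card {x\<in>{1..n}. E w x}"
    using card_b[OF w w] by simp
  also have "\<dots> = card (insert v (A \<union> B))"
    unfolding A_def B_def using neighbours_split_by_gdist[OF sg conn vw] by simp
  also have "\<dots> = card A + card B + 1"
  proof -
    have "v \<notin> A \<union> B" unfolding A_def B_def using irrefl by auto
    moreover have "A \<inter> B = {}"
      unfolding A_def B_def using gdist_eq_1_iff[of _ E 1 v] irrefl by fastforce
    ultimately show ?thesis
      unfolding A_def B_def by (simp add: card_Un_disjoint)
  qed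
  also have "card B = b 1"
    using card_b[OF v w] unfolding B_def vw_dist by (simp add: numeral_2_eq_2)
  finally show ?thesis unfolding A_def .
qed

theorem lemma3p5:
  fixes n :: nat and E :: "nat \<Rightarrow> nat \<Rightarrow> bool"
  assumes "simple_graph n E"
  shows "((\<forall>i k. E i k \<longrightarrow> card {l\<in>{1..n}. E i l \<and> E k l} = 1)
            \<longrightarrow> qaut_eq_star TYPE('a::{real_normed_algebra_1,banach}) n E)
       \<and> ((\<exists>D b c. distance_regular n E D b c \<and> b 0 = b 1 + 2)
            \<longrightarrow> qaut_eq_star TYPE('a::{real_normed_algebra_1,banach}) n E)"
proof (intro conjI impI)
  assume "\<forall>i k. E i k \<longrightarrow> card {l\<in>{1..n}. E i l \<and> E k l} = 1"
  then show "qaut_eq_star TYPE('a) n E"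
    by (rule qaut_eq_star_if_unique_common_neighbours[OF assms])
next
  assume "\<exists>D b c. distance_regular n E D b c \<and> b 0 = b 1 + 2"
  then obtain D b c where "distance_regular n E D b c" and "b 0 = b 1 + 2" by blast
  then have "\<forall>i k. E i k \<longrightarrow> card {l\<in>{1..n}. E i l \<and> E k l} = 1"
    using distance_regular_card_common_neighbours[OF assms] by fastforce
  then show "qaut_eq_star TYPE('a) n E"
    by (rule qaut_eq_star_if_unique_common_neighbours[OF assms])
qed

end
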